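(* Let $v$ be a quadratic vector field on $\mathbb{C}^2$ having four distinct non-degenerate singular points $p_1,p_2,p_3,p_4$. Then the position $p_4$ and the pair $(\operatorname{tr}Dv(p_4),\det Dv(p_4))$ are uniquely determined by the positions $p_1,p_2,p_3$ together with the pairs $(\operatorname{tr}Dv(p_k),\det Dv(p_k))$ for $k=1,2,3$. In particular, if two such quadratic vector fields share three singular points, with the same trace and determinant of the linearization at each of them, then they share the fourth singular point, with the same trace and determinant there as well.
   Context: A quadratic vector field is $v=P\,\partial_x+Q\,\partial_y$ with $P,Q\in\mathbb{C}[x,y]$ of degree at most $2$. $Dv$ denotes the Jacobian matrix of $(P,Q)$. A singular point $p$ is a common zero of $P,Q$, and it is non-degenerate if $\det Dv(p)\ne0$. *)

theory Defs
  imports "HOL-Analysis.Analysis"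
begin

record qpoly =
  c00 :: complex
  c10 :: complex
  c01 :: complex
  c20 :: complex
  c11 :: complex
  c02 :: complex

definition qeval :: "qpoly \<Rightarrow> complex \<Rightarrow> complex \<Rightarrow> complex" where
  "qeval p x y = c00 p + c10 p * x + c01 p * y + c20 p * x^2 + c11 p * x * y + c02 p * y^2"

definition qdx :: "qpoly \<Rightarrow> complex \<Rightarrow> complex \<Rightarrow> complex" where
  "qdx p x y = c10 p + 2 * c20 p * x + c11 p * y"

definition qdy :: "qpoly \<Rightarrow> complex \<Rightarrow> complex \<Rightarrow> complex" where
  "qdy p x y = c01 p + c11 p * x + 2 * c02 p * y"

text \<open>A quadratic vector field v = P d/dx + Q d/dy is the pair (P, Q).\<close>
type_synonym qvf = "qpoly \<times> qpoly"

definition singular_point :: "qvf \<Rightarrow> complex \<times> complex \<Rightarrow> bool" where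
  "singular_point v p \<longleftrightarrow> qeval (fst v) (fst p) (snd p) = 0 \<and> qeval (snd v) (fst p) (snd p) = 0"

definition Dv :: "qvf \<Rightarrow> complex \<times> complex \<Rightarrow> complex^2^2" where
  "Dv v p = vector [vector [qdx (fst v) (fst p) (snd p), qdy (fst v) (fst p) (snd p)],
                    vector [qdx (snd v) (fst p) (snd p), qdy (snd v) (fst p) (snd p)]]"

definition nondeg_singular_point :: "qvf \<Rightarrow> complex \<times> complex \<Rightarrow> bool" where
  "nondeg_singular_point v p \<longleftrightarrow> singular_point v p \<and> det (Dv v p) \<noteq> 0"

end

theory Submission
  imports Defs
begin

text \<open>For four non-degenerate singular points p1, ..., p4 of a quadratic vector field the
Euler--Jacobi formula holds: the sum over k of f(p_k) / det Dv(p_k) vanishes for every affine f.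
Indeed, the four reciprocals 1 / det Dv(p_k) are proportional to the coefficients
\<plusminus>area(p_i, p_j, p_l) of the affine dependence among the four points; this follows from
Taylor expansion at p_k, which expresses area(p_k, p_i, p_j) * det Dv(p_k) through the quadratic
parts alone. Applied to f = 1, x, y and tr Dv, whose values (and the determinants) at p1, p2, p3
are shared by the two fields, the formula pins down det Dv, the coordinates and tr Dv at the fourth
point.\<close>

definition cdot3 :: "complex^3 \<Rightarrow> complex^3 \<Rightarrow> complex" where
  "cdot3 a b = a$1 * b$1 + a$2 * b$2 + a$3 * b$3"

definition ccross3 :: "complex^3 \<Rightarrow> complex^3 \<Rightarrow> complex^3" where
  "ccross3 a b = vector [a$2 * b$3 - a$3 * b$2, a$3 * b$1 - a$1 * b$3, a$1 * b$2 - a$2 * b$1]"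

lemma cdot3_scalar_mult_left [simp]: "cdot3 (c *s a) b = c * cdot3 a b"
  by (simp add: cdot3_def algebra_simps)

lemma cdot3_zero_left [simp]: "cdot3 0 b = 0"
  by (simp add: cdot3_def)

lemma binet_cauchy_cdot3:
  "cdot3 a u * cdot3 b w - cdot3 b u * cdot3 a w = cdot3 (ccross3 a b) (ccross3 u w)"
  unfolding cdot3_def ccross3_def by simp algebra

lemma cdot3_eq_0_imp_parallel_ccross3:
  assumes "cdot3 a l = 0" "cdot3 b l = 0" "ccross3 a b \<noteq> 0"
  obtains c where "l = c *s ccross3 a b"
proof -
  define n where "n = ccross3 a b"
  have "\<forall>i j. n$i * l$j = n$j * l$i"
    using assms(1,2) unfolding forall_3 n_def ccross3_def cdot3_def by simp algebra
  then have par: "n$i * l$j = n$j * l$i" for i j by blast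
  obtain k where "n$k \<noteq> 0"
    using assms(3) unfolding n_def by (auto simp: vec_eq_iff)
  then have "l = (l$k / n$k) *s n"
    using par[of k] by (simp add: vec_eq_iff field_simps)
  then show ?thesis using that unfolding n_def by blast
qed

definition cross2 :: "complex \<times> complex \<Rightarrow> complex \<times> complex \<Rightarrow> complex" where
  "cross2 u w = fst u * snd w - snd u * fst w"

definition area2 :: "complex \<times> complex \<Rightarrow> complex \<times> complex \<Rightarrow> complex \<times> complex \<Rightarrow> complex" where
  "area2 p q r = cross2 (q - p) (r - p)"

definition alt_area_sum ::
    "(complex \<times> complex \<Rightarrow> complex) \<Rightarrow> complex \<times> complex \<Rightarrow> complex \<times> complex
       \<Rightarrow> complex \<times> complex \<Rightarrow> complex \<times> complex \<Rightarrow> complex" where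
  "alt_area_sum f p1 p2 p3 p4 =
     area2 p2 p3 p4 * f p1 - area2 p1 p3 p4 * f p2 + area2 p1 p2 p4 * f p3 - area2 p1 p2 p3 * f p4"

definition affine_fun :: "(complex \<times> complex \<Rightarrow> complex) \<Rightarrow> bool" where
  "affine_fun f \<longleftrightarrow> (\<exists>a b c. \<forall>x y. f (x, y) = a + b * x + c * y)"

lemma alt_area_sum_affine:
  assumes "affine_fun f"
  shows "alt_area_sum f p1 p2 p3 p4 = 0"
proof -
  obtain a b c where abc: "\<And>x y. f (x, y) = a + b * x + c * y"
    using assms unfolding affine_fun_def by blast
  show ?thesis
    unfolding alt_area_sum_def area2_def cross2_def
    by (induct p1, induct p2, induct p3, induct p4) (simp add: abc, algebra)
qed

lemma cross2_eq_0_imp_multiple: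
  assumes "cross2 u w = 0" "u \<noteq> 0"
  obtains t where "w = (t * fst u, t * snd u)"
proof (cases "fst u = 0")
  case True
  with assms have "snd u \<noteq> 0" "fst w = 0"
    by (auto simp: cross2_def prod_eq_iff)
  then show ?thesis
    using that[of "snd w / snd u"] True by (simp add: prod_eq_iff)
next
  case False
  with assms(1) have "snd w = fst w / fst u * snd u"
    by (simp add: cross2_def field_simps)
  then show ?thesis
    using that[of "fst w / fst u"] False by (simp add: prod_eq_iff)
qed

definition quad_coeffs :: "qpoly \<Rightarrow> complex^3" where
  "quad_coeffs P = vector [c20 P, c11 P, c02 P]"

definition veronese :: "complex \<times> complex \<Rightarrow> complex^3" where
  "veronese u = vector [fst u ^ 2, fst u * snd u, snd u ^ 2]"

definition dir_deriv :: "qpoly \<Rightarrow> complex \<times> complex \<Rightarrow> complex \<times> complex \<Rightarrow> complex" where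
  "dir_deriv P p u = qdx P (fst p) (snd p) * fst u + qdy P (fst p) (snd p) * snd u"

lemma qeval_taylor:
  "qeval P (fst q) (snd q) =
     qeval P (fst p) (snd p) + dir_deriv P p (q - p) + cdot3 (quad_coeffs P) (veronese (q - p))"
  unfolding qeval_def dir_deriv_def qdx_def qdy_def quad_coeffs_def veronese_def cdot3_def
  by simp algebra

lemma dir_deriv_between_zeros:
  assumes "qeval P (fst p) (snd p) = 0" "qeval P (fst q) (snd q) = 0"
  shows "dir_deriv P p (q - p) = - cdot3 (quad_coeffs P) (veronese (q - p))"
  using qeval_taylor[of P q p] assms by (simp add: eq_neg_iff_add_eq_0)

lemma dir_deriv_zero_of_collinear_zeros:
  assumes "qeval P (fst p) (snd p) = 0" "qeval P (fst q) (snd q) = 0" "qeval P (fst r) (snd r) = 0"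
    and r: "r - p = (t * fst (q - p), t * snd (q - p))" and "t \<noteq> 0" "t \<noteq> 1"
  shows "dir_deriv P p (q - p) = 0"
proof -
  define A where "A = cdot3 (quad_coeffs P) (veronese (q - p))"
  have "dir_deriv P p (q - p) = - A"
    using dir_deriv_between_zeros[OF assms(1,2)] by (simp add: A_def)
  moreover have "t * dir_deriv P p (q - p) = - (t^2 * A)"
    using dir_deriv_between_zeros[OF assms(1,3)] unfolding r A_def
    by (simp add: dir_deriv_def veronese_def cdot3_def algebra_simps power2_eq_square)
  ultimately have "A * t * (t - 1) = 0" by algebra
  with assms(5,6) have "A = 0" by simp
  with \<open>dir_deriv P p (q - p) = - A\<close> show ?thesis by simp
qed

lemma det_Dv_eq:
  "det (Dv v p) = qdx (fst v) (fst p) (snd p) * qdy (snd v) (fst p) (snd p)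
                - qdy (fst v) (fst p) (snd p) * qdx (snd v) (fst p) (snd p)"
  by (simp add: Dv_def det_2)

lemma trace_Dv_eq: "trace (Dv v p) = qdx (fst v) (fst p) (snd p) + qdy (snd v) (fst p) (snd p)"
  by (simp add: Dv_def trace_def sum_2)

lemma det_Dv_mult_cross2:
  "det (Dv v p) * cross2 u w =
     dir_deriv (fst v) p u * dir_deriv (snd v) p w - dir_deriv (snd v) p u * dir_deriv (fst v) p w"
  unfolding det_Dv_eq dir_deriv_def cross2_def by algebra

lemma det_Dv_eq_0_if_kernel:
  assumes "dir_deriv (fst v) p u = 0" "dir_deriv (snd v) p u = 0" "u \<noteq> 0"
  shows "det (Dv v p) = 0"
proof -
  have "det (Dv v p) * cross2 u w = 0" for w
    using assms(1,2) by (simp add: det_Dv_mult_cross2)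
  from this[of "(1, 0)"] this[of "(0, 1)"] assms(3) show ?thesis
    by (auto simp: cross2_def prod_eq_iff)
qed

lemma area2_singular_points_nonzero:
  assumes "nondeg_singular_point v p" "singular_point v q" "singular_point v r"
    and "distinct [p, q, r]"
  shows "area2 p q r \<noteq> 0"
proof
  assume "area2 p q r = 0"
  moreover have "q - p \<noteq> 0" using assms(4) by auto
  ultimately obtain t where t: "r - p = (t * fst (q - p), t * snd (q - p))"
    unfolding area2_def by (rule cross2_eq_0_imp_multiple)
  have "t \<noteq> 0" "t \<noteq> 1"
    using t assms(4) by (auto simp: prod_eq_iff)
  then have "dir_deriv F p (q - p) = 0" if "F \<in> {fst v, snd v}" for F
    using that assms(1-3) t
    by (auto simp: nondeg_singular_point_def singular_point_def
             intro: dir_deriv_zero_of_collinear_zeros)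
  with \<open>q - p \<noteq> 0\<close> have "det (Dv v p) = 0"
    by (intro det_Dv_eq_0_if_kernel) auto
  with assms(1) show False by (simp add: nondeg_singular_point_def)
qed

lemma area2_mult_det_Dv:
  assumes "singular_point v p" "singular_point v q" "singular_point v r"
  shows "area2 p q r * det (Dv v p) =
    cdot3 (ccross3 (quad_coeffs (fst v)) (quad_coeffs (snd v)))
          (ccross3 (veronese (q - p)) (veronese (r - p)))"
proof -
  have "dir_deriv F p (s - p) = - cdot3 (quad_coeffs F) (veronese (s - p))"
    if "F \<in> {fst v, snd v}" "s \<in> {q, r}" for F s
    using that assms by (auto simp: singular_point_def intro: dir_deriv_between_zeros)
  then show ?thesis
    unfolding area2_def mult.commute[of "cross2 _ _"] det_Dv_mult_cross2
    by (simp add: binet_cauchy_cdot3[symmetric])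
qed

definition veronese_alt_sum ::
    "complex \<times> complex \<Rightarrow> complex \<times> complex \<Rightarrow> complex \<times> complex \<Rightarrow> complex \<times> complex \<Rightarrow> complex^3" where
  "veronese_alt_sum p1 p2 p3 p4 = (\<chi> i. alt_area_sum (\<lambda>p. veronese p $ i) p1 p2 p3 p4)"

lemma cdot3_quad_coeffs_veronese_alt_sum:
  "cdot3 (quad_coeffs P) (veronese_alt_sum p1 p2 p3 p4) =
     alt_area_sum (\<lambda>p. qeval P (fst p) (snd p)) p1 p2 p3 p4"
  unfolding cdot3_def quad_coeffs_def veronese_alt_sum_def veronese_def alt_area_sum_def
    area2_def cross2_def qeval_def
  by (induct p1, induct p2, induct p3, induct p4) (simp, algebra)

lemma veronese_alt_sum_cdot3_ccross3:
  fixes p1 p2 p3 p4 :: "complex \<times> complex"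
  defines "l \<equiv> veronese_alt_sum p1 p2 p3 p4"
    and "D1 \<equiv> area2 p2 p3 p4" and "D2 \<equiv> area2 p1 p3 p4"
    and "D3 \<equiv> area2 p1 p2 p4" and "D4 \<equiv> area2 p1 p2 p3"
  shows "cdot3 l (ccross3 (veronese (p2 - p1)) (veronese (p3 - p1))) = area2 p1 p2 p3 * - (D2 * D3 * D4)"
    and "cdot3 l (ccross3 (veronese (p1 - p2)) (veronese (p3 - p2))) = area2 p2 p1 p3 * (D1 * D3 * D4)"
    and "cdot3 l (ccross3 (veronese (p1 - p3)) (veronese (p2 - p3))) = area2 p3 p1 p2 * - (D1 * D2 * D4)"
    and "cdot3 l (ccross3 (veronese (p1 - p4)) (veronese (p2 - p4))) = area2 p4 p1 p2 * (D1 * D2 * D3)"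
  unfolding assms cdot3_def ccross3_def veronese_alt_sum_def veronese_def alt_area_sum_def
    area2_def cross2_def
  by (induct p1, induct p2, induct p3, induct p4, simp, algebra)+

lemma inverse_det_Dv_proportional_to_areas:
  assumes "distinct [p1, p2, p3, p4]" and nondeg: "\<forall>p \<in> {p1, p2, p3, p4}. nondeg_singular_point v p"
  obtains \<mu> where "1 / det (Dv v p1) = - \<mu> * area2 p2 p3 p4" "1 / det (Dv v p2) = \<mu> * area2 p1 p3 p4"
    "1 / det (Dv v p3) = - \<mu> * area2 p1 p2 p4" "1 / det (Dv v p4) = \<mu> * area2 p1 p2 p3"
proof -
  txt \<open>l is orthogonal to the quadratic coefficients of both components of v, hence a
    multiple c of their cross product C; comparing area2_mult_det_Dv with
    veronese_alt_sum_cdot3_ccross3 then gives c * det (Dv v p_k) = \<plusminus>(product of the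
    other three areas).\<close>
  define l where "l = veronese_alt_sum p1 p2 p3 p4"
  define C where "C = ccross3 (quad_coeffs (fst v)) (quad_coeffs (snd v))"
  define D1 D2 D3 D4 where
    "D1 = area2 p2 p3 p4" "D2 = area2 p1 p3 p4" "D3 = area2 p1 p2 p4" "D4 = area2 p1 p2 p3"
  have sing: "singular_point v p" and det: "det (Dv v p) \<noteq> 0" if "p \<in> {p1, p2, p3, p4}" for p
    using nondeg that by (auto simp: nondeg_singular_point_def)
  have area: "area2 p q r \<noteq> 0" if "p \<in> {p1, p2, p3, p4}" "q \<in> {p1, p2, p3, p4}"
    "r \<in> {p1, p2, p3, p4}" "distinct [p, q, r]" for p q r
    using that nondeg by (intro area2_singular_points_nonzero) (auto simp: nondeg_singular_point_def)
  have "cdot3 (quad_coeffs F) l = 0" if "F \<in> {fst v, snd v}" for F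
    using that sing unfolding l_def cdot3_quad_coeffs_veronese_alt_sum alt_area_sum_def
    by (auto simp: singular_point_def)
  moreover have "C \<noteq> 0"
  proof
    assume "C = 0"
    with area2_mult_det_Dv[of v p1 p2 p3] sing have "area2 p1 p2 p3 * det (Dv v p1) = 0"
      by (simp add: C_def)
    with area[of p1 p2 p3] det[of p1] assms(1) show False by simp
  qed
  ultimately obtain c where c: "l = c *s C"
    unfolding C_def by (auto intro: cdot3_eq_0_imp_parallel_ccross3)
  have scale: "c * det (Dv v p) = R"
    if "p \<in> {p1, p2, p3, p4}" "q \<in> {p1, p2, p3, p4}" "r \<in> {p1, p2, p3, p4}" "distinct [p, q, r]"
      and "cdot3 l (ccross3 (veronese (q - p)) (veronese (r - p))) = area2 p q r * R" for p q r R
  proof -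
    have "area2 p q r * (c * det (Dv v p)) = area2 p q r * R"
      using area2_mult_det_Dv[of v p q r] sing that(1-3,5) by (simp add: c C_def mult.left_commute)
    with area[OF that(1-4)] show ?thesis by simp
  qed
  note G = veronese_alt_sum_cdot3_ccross3[of p1 p2 p3 p4, folded l_def]
  have "c * det (Dv v p1) = - (D2 * D3 * D4)" "c * det (Dv v p2) = D1 * D3 * D4"
    "c * det (Dv v p3) = - (D1 * D2 * D4)" "c * det (Dv v p4) = D1 * D2 * D3"
    unfolding D1_D2_D3_D4_def using assms(1) by (intro scale[OF _ _ _ _ G(1)] scale[OF _ _ _ _ G(2)]
        scale[OF _ _ _ _ G(3)] scale[OF _ _ _ _ G(4)]; auto)+
  moreover have "D1 \<noteq> 0" "D2 \<noteq> 0" "D3 \<noteq> 0" "D4 \<noteq> 0"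
    unfolding D1_D2_D3_D4_def using area assms(1) by auto
  ultimately show ?thesis
    using that[of "c / (D1 * D2 * D3 * D4)"] det unfolding D1_D2_D3_D4_def[symmetric]
    by (simp add: field_simps)
qed

theorem euler_jacobi_four_singular_points:
  assumes "distinct [p1, p2, p3, p4]" "\<forall>p \<in> {p1, p2, p3, p4}. nondeg_singular_point v p"
    and "affine_fun f"
  shows "f p1 / det (Dv v p1) + f p2 / det (Dv v p2) + f p3 / det (Dv v p3) + f p4 / det (Dv v p4) = 0"
proof -
  obtain \<mu> where \<mu>: "1 / det (Dv v p1) = - \<mu> * area2 p2 p3 p4" "1 / det (Dv v p2) = \<mu> * area2 p1 p3 p4"
    "1 / det (Dv v p3) = - \<mu> * area2 p1 p2 p4" "1 / det (Dv v p4) = \<mu> * area2 p1 p2 p3"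
    using inverse_det_Dv_proportional_to_areas[OF assms(1,2)] by blast
  have div_eq: "f p / det (Dv v p) = f p * (1 / det (Dv v p))" for p by simp
  have "f p1 / det (Dv v p1) + f p2 / det (Dv v p2) + f p3 / det (Dv v p3) + f p4 / det (Dv v p4)
      = - \<mu> * alt_area_sum f p1 p2 p3 p4"
    unfolding alt_area_sum_def div_eq \<mu> by algebra
  with alt_area_sum_affine[OF assms(3)] show ?thesis by simp
qed

lemma affine_fun_const: "affine_fun (\<lambda>_. c)"
  unfolding affine_fun_def by (intro exI[of _ c] exI[of _ 0]) simp

lemma affine_fun_fst: "affine_fun fst"
  unfolding affine_fun_def by (rule exI[of _ 0], rule exI[of _ 1]) simp

lemma affine_fun_snd: "affine_fun snd"
  unfolding affine_fun_def by (rule exI[of _ 0], rule exI[of _ 0], rule exI[of _ 1]) simp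

lemma affine_fun_trace_Dv: "affine_fun (\<lambda>p. trace (Dv v p))"
  unfolding affine_fun_def trace_Dv_eq qdx_def qdy_def
  by (intro exI[of _ "c10 (fst v) + c01 (snd v)"] exI[of _ "2 * c20 (fst v) + c11 (snd v)"]
        exI[of _ "c11 (fst v) + 2 * c02 (snd v)"]) (simp add: algebra_simps)

lemma fourth_singular_point_ratio_eq:
  assumes "distinct [p1, p2, p3, p4]" "\<forall>p \<in> {p1, p2, p3, p4}. nondeg_singular_point v p"
    and "distinct [p1, p2, p3, q4]" "\<forall>p \<in> {p1, p2, p3, q4}. nondeg_singular_point w p"
    and "\<forall>p \<in> {p1, p2, p3}. det (Dv v p) = det (Dv w p) \<and> f p = g p"
    and "affine_fun f" "affine_fun g"
  shows "g q4 / det (Dv w q4) = f p4 / det (Dv v p4)"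
proof -
  have "f p / det (Dv v p) = g p / det (Dv w p)" if "p \<in> {p1, p2, p3}" for p
    using assms(5) that by auto
  then show ?thesis
    using euler_jacobi_four_singular_points[OF assms(1,2,6)]
      euler_jacobi_four_singular_points[OF assms(3,4,7)]
    by (metis add_left_cancel insert_iff)
qed

theorem lemma4p1:
  fixes v w :: qvf and p1 p2 p3 p4 q4 :: "complex \<times> complex"
  assumes "distinct [p1, p2, p3, p4]"
    and "\<forall>p \<in> {p1, p2, p3, p4}. nondeg_singular_point v p"
    and "distinct [p1, p2, p3, q4]"
    and "\<forall>p \<in> {p1, p2, p3, q4}. nondeg_singular_point w p"
    and "\<forall>p \<in> {p1, p2, p3}. trace (Dv v p) = trace (Dv w p) \<and> det (Dv v p) = det (Dv w p)"
  shows "q4 = p4 \<and> trace (Dv w q4) = trace (Dv v p4) \<and> det (Dv w q4) = det (Dv v p4)"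
proof -
  have ratio: "g q4 / det (Dv w q4) = f p4 / det (Dv v p4)"
    if "affine_fun f" "affine_fun g" "\<forall>p \<in> {p1, p2, p3}. f p = g p" for f g
    using assms that by (intro fourth_singular_point_ratio_eq) auto
  have "det (Dv v p4) \<noteq> 0" "det (Dv w q4) \<noteq> 0"
    using assms(2,4) by (auto simp: nondeg_singular_point_def)
  moreover have "det (Dv w q4) = det (Dv v p4)"
    using ratio[OF affine_fun_const affine_fun_const, of 1 1] calculation by simp
  moreover have "q4 = p4"
    using ratio[OF affine_fun_fst affine_fun_fst] ratio[OF affine_fun_snd affine_fun_snd]
      calculation by (auto simp: prod_eq_iff)
  moreover have "trace (Dv w q4) = trace (Dv v p4)"
    using ratio[OF affine_fun_trace_Dv[of v] affine_fun_trace_Dv[of w]] assms(5) calculation by auto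
  ultimately show ?thesis by simp
qed

end
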